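(* Let $\Phi$ be a second-order constraint problem with model $(J,\xi)$. Then there exists a second-order substitution $\xi_r$ such that $(J,\xi_r)$ is a model of $\Phi$ and $\mathrm{Var}(\xi_r(\alpha))\subseteq\mathrm{SV}(\alpha)$ for every second-order variable $\alpha$ occurring in $\Phi$.
   Context: Index terms over index variables $i$ and index symbols $g$ (including $0,\mathsf s,+$); an interpretation $J$ maps each $k$-ary $g$ to a total weakly monotone function $\mathbb N^k\to\mathbb N$ ($0,\mathsf s,+$ as zero, successor, addition); $a\le_J b$ iff $[a]^\beta_J\le[b]^\beta_J$ for every assignment $\beta$ of naturals to index variables. Second-order index terms: $a::=i\mid\alpha\mid g(a_1,\dots,a_{\mathrm{ar}(g)})$ where $\alpha$ ranges over a countably infinite set of second-order index variables; $\mathrm{Var}(a)$ is the set of (first-order) index variables and $\mathrm{SOVar}(a)$ the set of second-order variables of $a$. A second-order constraint problem (SOCP) $\Phi$ is a set of inequality constraints $a\le b$ (second-order index terms) and occurrence constraints $i\notin\alpha$. A second-order substitution $\xi$ maps second-order variables to index terms containing no second-order variables. $(J,\xi)$ is a model of $\Phi$ if $a\xi\le_J b\xi$ for every inequality $a\le b\in\Phi$ and $i\notin\mathrm{Var}(\xi(\alpha))$ for every occurrence constraint $i\notin\alpha\in\Phi$. Skolem variables: for the second-order variables $\beta$ of $\Phi$, let $V(\beta)$ be the least sets of index variables such that for every $(a\le b)\in\Phi$ with $\beta\in\mathrm{SOVar}(b)$: $\mathrm{Var}(a)\subseteq V(\beta)$, and $V(\alpha)\subseteq V(\beta)$ for every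 $\alpha\in\mathrm{SOVar}(a)$. Then $\mathrm{SV}(\beta)=V(\beta)\setminus\{i\mid(i\notin\beta)\in\Phi\}$. *)

theory Defs
  imports Main
begin

datatype 'g isym = IZero | ISucc | IPlus | ISym 'g

(* Second-order index terms over index variables 'v and second-order variables 's.
   First-order index terms are those without second-order variables. *)
datatype ('v, 's, 'g) iterm =
    IVar 'v
  | SOVar 's
  | IApp "'g isym" "('v, 's, 'g) iterm list"

fun sym_arity :: "('g \<Rightarrow> nat) \<Rightarrow> 'g isym \<Rightarrow> nat" where
  "sym_arity ar IZero = 0"
| "sym_arity ar ISucc = 1"
| "sym_arity ar IPlus = 2"
| "sym_arity ar (ISym g) = ar g"

fun wf_iterm :: "('g \<Rightarrow> nat) \<Rightarrow> ('v, 's, 'g) iterm \<Rightarrow> bool" where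
  "wf_iterm ar (IVar i) = True"
| "wf_iterm ar (SOVar \<alpha>) = True"
| "wf_iterm ar (IApp f ts) = (length ts = sym_arity ar f \<and> (\<forall>t\<in>set ts. wf_iterm ar t))"

fun Vars :: "('v, 's, 'g) iterm \<Rightarrow> 'v set" where
  "Vars (IVar i) = {i}"
| "Vars (SOVar \<alpha>) = {}"
| "Vars (IApp f ts) = (\<Union>t\<in>set ts. Vars t)"

fun SOVars :: "('v, 's, 'g) iterm \<Rightarrow> 's set" where
  "SOVars (IVar i) = {}"
| "SOVars (SOVar \<alpha>) = {\<alpha>}"
| "SOVars (IApp f ts) = (\<Union>t\<in>set ts. SOVars t)"

definition wf_interp :: "('g \<Rightarrow> nat) \<Rightarrow> ('g \<Rightarrow> nat list \<Rightarrow> nat) \<Rightarrow> bool" where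
  "wf_interp ar J \<longleftrightarrow>
     (\<forall>g xs ys. length xs = ar g \<and> length ys = ar g \<and>
        (\<forall>k < ar g. xs ! k \<le> ys ! k) \<longrightarrow> J g xs \<le> J g ys)"

fun interp_sym :: "('g \<Rightarrow> nat list \<Rightarrow> nat) \<Rightarrow> 'g isym \<Rightarrow> nat list \<Rightarrow> nat" where
  "interp_sym J IZero xs = 0"
| "interp_sym J ISucc xs = Suc (xs ! 0)"
| "interp_sym J IPlus xs = xs ! 0 + xs ! 1"
| "interp_sym J (ISym g) xs = J g xs"

(* value [a]^beta_J; second-order variables get the dummy value 0
   (only ever applied to terms without second-order variables) *)
fun ieval :: "('g \<Rightarrow> nat list \<Rightarrow> nat) \<Rightarrow> ('v \<Rightarrow> nat) \<Rightarrow> ('v, 's, 'g) iterm \<Rightarrow> nat" where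
  "ieval J \<beta> (IVar i) = \<beta> i"
| "ieval J \<beta> (SOVar \<alpha>) = 0"
| "ieval J \<beta> (IApp f ts) = interp_sym J f (map (ieval J \<beta>) ts)"

definition leJ :: "('g \<Rightarrow> nat list \<Rightarrow> nat) \<Rightarrow> ('v, 's, 'g) iterm \<Rightarrow> ('v, 's, 'g) iterm \<Rightarrow> bool" where
  "leJ J a b \<longleftrightarrow> (\<forall>\<beta>. ieval J \<beta> a \<le> ieval J \<beta> b)"

fun so_apply :: "('s \<Rightarrow> ('v, 's, 'g) iterm) \<Rightarrow> ('v, 's, 'g) iterm \<Rightarrow> ('v, 's, 'g) iterm" where
  "so_apply \<xi> (IVar i) = IVar i"
| "so_apply \<xi> (SOVar \<alpha>) = \<xi> \<alpha>"
| "so_apply \<xi> (IApp f ts) = IApp f (map (so_apply \<xi>) ts)"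

definition so_subst :: "('g \<Rightarrow> nat) \<Rightarrow> ('s \<Rightarrow> ('v, 's, 'g) iterm) \<Rightarrow> bool" where
  "so_subst ar \<xi> \<longleftrightarrow> (\<forall>\<alpha>. wf_iterm ar (\<xi> \<alpha>) \<and> SOVars (\<xi> \<alpha>) = {})"

datatype ('v, 's, 'g) constr =
    Leq "('v, 's, 'g) iterm" "('v, 's, 'g) iterm"
  | NotIn 'v 's

definition wf_socp :: "('g \<Rightarrow> nat) \<Rightarrow> ('v, 's, 'g) constr set \<Rightarrow> bool" where
  "wf_socp ar \<Phi> \<longleftrightarrow> (\<forall>a b. Leq a b \<in> \<Phi> \<longrightarrow> wf_iterm ar a \<and> wf_iterm ar b)"

definition is_model ::
  "('g \<Rightarrow> nat list \<Rightarrow> nat) \<Rightarrow> ('s \<Rightarrow> ('v, 's, 'g) iterm) \<Rightarrow> ('v, 's, 'g) constr set \<Rightarrow> bool" where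
  "is_model J \<xi> \<Phi> \<longleftrightarrow>
     (\<forall>a b. Leq a b \<in> \<Phi> \<longrightarrow> leJ J (so_apply \<xi> a) (so_apply \<xi> b)) \<and>
     (\<forall>i \<alpha>. NotIn i \<alpha> \<in> \<Phi> \<longrightarrow> i \<notin> Vars (\<xi> \<alpha>))"

definition SOVars_socp :: "('v, 's, 'g) constr set \<Rightarrow> 's set" where
  "SOVars_socp \<Phi> =
     (\<Union>c\<in>\<Phi>. case c of Leq a b \<Rightarrow> SOVars a \<union> SOVars b | NotIn i \<alpha> \<Rightarrow> {\<alpha>})"

inductive inV :: "('v, 's, 'g) constr set \<Rightarrow> 'v \<Rightarrow> 's \<Rightarrow> bool" for \<Phi> where
  base: "\<lbrakk>Leq a b \<in> \<Phi>; \<beta> \<in> SOVars b; i \<in> Vars a\<rbrakk> \<Longrightarrow> inV \<Phi> i \<beta>"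
| step: "\<lbrakk>Leq a b \<in> \<Phi>; \<beta> \<in> SOVars b; \<alpha> \<in> SOVars a; inV \<Phi> i \<alpha>\<rbrakk> \<Longrightarrow> inV \<Phi> i \<beta>"

definition SV :: "('v, 's, 'g) constr set \<Rightarrow> 's \<Rightarrow> 'v set" where
  "SV \<Phi> \<beta> = {i. inV \<Phi> i \<beta>} - {i. NotIn i \<beta> \<in> \<Phi>}"

end

theory Submission
  imports Defs
begin

text \<open>Replace every variable of \<open>\<xi>(\<alpha>)\<close> outside \<open>SV(\<alpha>)\<close> by \<open>0\<close>. Occurrence constraints
  survive since no variable is added. For \<open>a \<le> b\<close> and an assignment \<open>\<beta>\<close>, let \<open>\<gamma>\<close> agree with \<open>\<beta>\<close>
  on the variables of \<open>a\<close> and on \<open>V(\<alpha>)\<close> for \<open>\<alpha>\<close> in \<open>a\<close>, and be \<open>0\<close> elsewhere. Then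
  \<open>[a\<xi>\<^sub>r]\<^sub>\<beta> = [a\<xi>\<^sub>r]\<^sub>\<gamma> \<le> [a\<xi>]\<^sub>\<gamma> \<le> [b\<xi>]\<^sub>\<gamma> \<le> [b\<xi>\<^sub>r]\<^sub>\<beta>\<close> by monotonicity: in the last step a variable
  of \<open>\<xi>(\<alpha>)\<close>, \<open>\<alpha>\<close> in \<open>b\<close>, that was replaced by \<open>0\<close> is either outside \<open>V(\<alpha>)\<close>, which contains
  every variable on which \<open>\<gamma>\<close> is non-zero, or excluded by an occurrence constraint \<open>i \<notin> \<alpha>\<close>,
  which \<open>\<xi>\<close> satisfies, so it does not occur at all.\<close>

fun restrict_vars :: "'v set \<Rightarrow> ('v, 's, 'g) iterm \<Rightarrow> ('v, 's, 'g) iterm" where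
  "restrict_vars S (IVar i) = (if i \<in> S then IVar i else IApp IZero [])"
| "restrict_vars S (SOVar \<alpha>) = SOVar \<alpha>"
| "restrict_vars S (IApp f ts) = IApp f (map (restrict_vars S) ts)"

lemma Vars_restrict_vars: "Vars (restrict_vars S t) = Vars t \<inter> S"
  by (induction t) auto

lemma SOVars_restrict_vars: "SOVars (restrict_vars S t) = SOVars t"
  by (induction t) auto

lemma wf_iterm_restrict_vars: "wf_iterm ar t \<Longrightarrow> wf_iterm ar (restrict_vars S t)"
  by (induction t) auto

lemma ieval_restrict_vars:
  "ieval J \<beta> (restrict_vars S t) = ieval J (\<lambda>i. if i \<in> S then \<beta> i else 0) t"
  by (induction t) (simp_all cong: map_cong)

lemma ieval_cong: "\<forall>i\<in>Vars t. \<beta> i = \<gamma> i \<Longrightarrow> ieval J \<beta> t = ieval J \<gamma> t"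
proof (induction t)
  case (IApp f ts)
  then have "map (ieval J \<beta>) ts = map (ieval J \<gamma>) ts" by auto
  then show ?case by (simp only: ieval.simps)
qed simp_all

lemma so_apply_SOVar: "so_apply SOVar t = t"
  by (induction t) (simp_all add: map_idI)

lemma Vars_so_apply: "Vars (so_apply \<sigma> t) = Vars t \<union> (\<Union>\<alpha>\<in>SOVars t. Vars (\<sigma> \<alpha>))"
  by (induction t) auto

lemma interp_sym_mono:
  assumes "wf_interp ar J" "length xs = sym_arity ar f" "length ys = sym_arity ar f"
    and "\<forall>k<sym_arity ar f. xs ! k \<le> ys ! k"
  shows "interp_sym J f xs \<le> interp_sym J f ys"
proof (cases f)
  case IPlus
  then have "xs ! 0 \<le> ys ! 0" "xs ! 1 \<le> ys ! 1" using assms(4) by auto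
  then show ?thesis using IPlus by simp
qed (use assms in \<open>auto simp: wf_interp_def\<close>)

lemma ieval_so_apply_mono:
  assumes "wf_interp ar J" "wf_iterm ar t"
    and "\<And>i. i \<in> Vars t \<Longrightarrow> \<beta> i \<le> \<gamma> i"
    and "\<And>\<alpha>. \<alpha> \<in> SOVars t \<Longrightarrow> ieval J \<beta> (\<sigma> \<alpha>) \<le> ieval J \<gamma> (\<tau> \<alpha>)"
  shows "ieval J \<beta> (so_apply \<sigma> t) \<le> ieval J \<gamma> (so_apply \<tau> t)"
  using assms(2-4)
proof (induction t)
  case (IApp f ts)
  have "ieval J \<beta> (so_apply \<sigma> t) \<le> ieval J \<gamma> (so_apply \<tau> t)" if "t \<in> set ts" for t
    using IApp.IH[OF that] IApp.prems that by auto
  then have "\<forall>k<sym_arity ar f. map (ieval J \<beta> \<circ> so_apply \<sigma>) ts ! k \<le> map (ieval J \<gamma> \<circ> so_apply \<tau>) ts ! k"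
    using IApp.prems(1) by auto
  then show ?case using IApp.prems(1) interp_sym_mono[OF assms(1)] by simp
qed simp_all

lemma ieval_mono:
  assumes "wf_interp ar J" "wf_iterm ar t" "\<And>i. i \<in> Vars t \<Longrightarrow> \<beta> i \<le> \<gamma> i"
  shows "ieval J \<beta> t \<le> ieval J \<gamma> t"
  using ieval_so_apply_mono[OF assms, where \<sigma> = SOVar and \<tau> = SOVar] by (simp add: so_apply_SOVar)

definition restrict_subst :: "('v, 's, 'g) constr set \<Rightarrow> ('s \<Rightarrow> ('v, 's, 'g) iterm) \<Rightarrow> 's \<Rightarrow> ('v, 's, 'g) iterm" where
  "restrict_subst \<Phi> \<xi> \<alpha> = restrict_vars (SV \<Phi> \<alpha>) (\<xi> \<alpha>)"

lemma Vars_restrict_subst: "Vars (restrict_subst \<Phi> \<xi> \<alpha>) = Vars (\<xi> \<alpha>) \<inter> SV \<Phi> \<alpha>"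
  by (simp add: restrict_subst_def Vars_restrict_vars)

lemma so_subst_restrict_subst: "so_subst ar \<xi> \<Longrightarrow> so_subst ar (restrict_subst \<Phi> \<xi>)"
  by (simp add: so_subst_def restrict_subst_def SOVars_restrict_vars wf_iterm_restrict_vars)

lemma leJ_restrict_subst:
  fixes \<Phi> :: "('v, 's, 'g) constr set"
  assumes J: "wf_interp ar J" and \<Phi>: "wf_socp ar \<Phi>" and \<xi>: "so_subst ar \<xi>"
    and model: "is_model J \<xi> \<Phi>" and ab: "Leq a b \<in> \<Phi>"
  shows "leJ J (so_apply (restrict_subst \<Phi> \<xi>) a) (so_apply (restrict_subst \<Phi> \<xi>) b)"
  unfolding leJ_def
proof
  fix \<beta> :: "'v \<Rightarrow> nat"
  let ?\<xi>r = "restrict_subst \<Phi> \<xi>"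
  define S where "S = Vars a \<union> (\<Union>\<alpha>\<in>SOVars a. {i. inV \<Phi> i \<alpha>})"
  define \<gamma> where "\<gamma> i = (if i \<in> S then \<beta> i else 0)" for i
  have wf_a: "wf_iterm ar a" and wf_b: "wf_iterm ar b"
    using \<Phi> ab by (auto simp: wf_socp_def)
  have wf_\<xi>: "wf_iterm ar (\<xi> \<alpha>)" for \<alpha>
    using \<xi> by (simp add: so_subst_def)
  have "Vars (so_apply ?\<xi>r a) \<subseteq> S"
    by (auto simp: Vars_so_apply Vars_restrict_subst S_def SV_def)
  then have "ieval J \<beta> (so_apply ?\<xi>r a) = ieval J \<gamma> (so_apply ?\<xi>r a)"
    by (intro ieval_cong) (auto simp: \<gamma>_def)
  also have "\<dots> \<le> ieval J \<gamma> (so_apply \<xi> a)"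
  proof (rule ieval_so_apply_mono[OF J wf_a])
    fix \<alpha>
    show "ieval J \<gamma> (?\<xi>r \<alpha>) \<le> ieval J \<gamma> (\<xi> \<alpha>)"
      unfolding restrict_subst_def ieval_restrict_vars by (rule ieval_mono[OF J wf_\<xi>]) simp
  qed simp
  also have "\<dots> \<le> ieval J \<gamma> (so_apply \<xi> b)"
    using model ab by (auto simp: is_model_def leJ_def)
  also have "\<dots> \<le> ieval J \<beta> (so_apply ?\<xi>r b)"
  proof (rule ieval_so_apply_mono[OF J wf_b])
    fix \<alpha> assume \<alpha>: "\<alpha> \<in> SOVars b"
    have S_V: "S \<subseteq> {i. inV \<Phi> i \<alpha>}"
      unfolding S_def using ab \<alpha> by (auto intro: inV.intros)
    have "\<gamma> i \<le> (if i \<in> SV \<Phi> \<alpha> then \<beta> i else 0)" if i: "i \<in> Vars (\<xi> \<alpha>)" for i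
    proof (cases "i \<in> S")
      case True
      have "NotIn i \<alpha> \<notin> \<Phi>" using model i by (auto simp: is_model_def)
      with True S_V show ?thesis by (simp add: \<gamma>_def SV_def subset_iff)
    qed (simp add: \<gamma>_def)
    then show "ieval J \<gamma> (\<xi> \<alpha>) \<le> ieval J \<beta> (?\<xi>r \<alpha>)"
      unfolding restrict_subst_def ieval_restrict_vars by (rule ieval_mono[OF J wf_\<xi>])
  qed (simp add: \<gamma>_def)
  finally show "ieval J \<beta> (so_apply ?\<xi>r a) \<le> ieval J \<beta> (so_apply ?\<xi>r b)" .
qed

theorem mainTheorem10:
  fixes ar :: "'g \<Rightarrow> nat"
    and J :: "'g \<Rightarrow> nat list \<Rightarrow> nat"
    and \<xi> :: "'s \<Rightarrow> ('v, 's, 'g) iterm"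
    and \<Phi> :: "('v, 's, 'g) constr set"
  assumes "wf_interp ar J"
    and "wf_socp ar \<Phi>"
    and "so_subst ar \<xi>"
    and "is_model J \<xi> \<Phi>"
  shows "\<exists>\<xi>r. so_subst ar \<xi>r \<and> is_model J \<xi>r \<Phi> \<and>
           (\<forall>\<alpha>\<in>SOVars_socp \<Phi>. Vars (\<xi>r \<alpha>) \<subseteq> SV \<Phi> \<alpha>)"
proof (intro exI conjI)
  show "so_subst ar (restrict_subst \<Phi> \<xi>)"
    using assms(3) by (rule so_subst_restrict_subst)
  show "is_model J (restrict_subst \<Phi> \<xi>) \<Phi>"
    using leJ_restrict_subst[OF assms] assms(4)
    by (auto simp: is_model_def Vars_restrict_subst)
  show "\<forall>\<alpha>\<in>SOVars_socp \<Phi>. Vars (restrict_subst \<Phi> \<xi> \<alpha>) \<subseteq> SV \<Phi> \<alpha>"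
    by (simp add: Vars_restrict_subst)
qed

end
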